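(* Let $G$ be a $K_3$-free graph and let $P,Q$ be two distinct bicliques of $G$ with $P\cap Q\neq\emptyset$. Then either $P$ and $Q$ are mutually included, or there is a biclique $R$ of $G$ that is mutually included with $P$ and mutually included with $Q$.
   Context: All graphs are finite and simple. A biclique of a graph $G$ is a set $P\subseteq V(G)$ such that the induced subgraph $G[P]$ is a complete bipartite graph with both parts nonempty, and $P$ is inclusion-maximal with this property. Since $G[P]$ is connected, its bipartition into two nonempty independent sets $X,Y$ (every vertex of $X$ adjacent to every vertex of $Y$) is unique; we write $P=XY$ to mean $P=X\cup Y$ with $X,Y$ these two parts, called the sides of $P$. Two bicliques $P,Q$ of $G$ are mutually included if their sides can be named $P=X_PY_P$, $Q=X_QY_Q$ so that $X_Q\subsetneq X_P$ and $Y_P\subsetneq Y_Q$. *)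

theory Defs
  imports Main
begin

definition simple_graph :: "'a set \<Rightarrow> ('a \<Rightarrow> 'a \<Rightarrow> bool) \<Rightarrow> bool" where
  "simple_graph V E \<longleftrightarrow> finite V \<and> (\<forall>x y. E x y \<longrightarrow> x \<in> V \<and> y \<in> V)
     \<and> (\<forall>x y. E x y \<longrightarrow> E y x) \<and> (\<forall>x. \<not> E x x)"

definition triangle_free :: "'a set \<Rightarrow> ('a \<Rightarrow> 'a \<Rightarrow> bool) \<Rightarrow> bool" where
  "triangle_free V E \<longleftrightarrow> \<not> (\<exists>x\<in>V. \<exists>y\<in>V. \<exists>z\<in>V. E x y \<and> E y z \<and> E x z)"

definition biclique_sides :: "'a set \<Rightarrow> ('a \<Rightarrow> 'a \<Rightarrow> bool) \<Rightarrow> 'a set \<Rightarrow> 'a set \<Rightarrow> bool" where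
  "biclique_sides V E X Y \<longleftrightarrow> X \<subseteq> V \<and> Y \<subseteq> V \<and> X \<noteq> {} \<and> Y \<noteq> {} \<and> X \<inter> Y = {}
     \<and> (\<forall>x\<in>X. \<forall>x'\<in>X. \<not> E x x') \<and> (\<forall>y\<in>Y. \<forall>y'\<in>Y. \<not> E y y')
     \<and> (\<forall>x\<in>X. \<forall>y\<in>Y. E x y)"

definition complete_bipartite_set :: "'a set \<Rightarrow> ('a \<Rightarrow> 'a \<Rightarrow> bool) \<Rightarrow> 'a set \<Rightarrow> bool" where
  "complete_bipartite_set V E P \<longleftrightarrow> (\<exists>X Y. P = X \<union> Y \<and> biclique_sides V E X Y)"

definition biclique :: "'a set \<Rightarrow> ('a \<Rightarrow> 'a \<Rightarrow> bool) \<Rightarrow> 'a set \<Rightarrow> bool" where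
  "biclique V E P \<longleftrightarrow> complete_bipartite_set V E P
     \<and> (\<forall>P'. P \<subset> P' \<longrightarrow> \<not> complete_bipartite_set V E P')"

definition mutually_included :: "'a set \<Rightarrow> ('a \<Rightarrow> 'a \<Rightarrow> bool) \<Rightarrow> 'a set \<Rightarrow> 'a set \<Rightarrow> bool" where
  "mutually_included V E P Q \<longleftrightarrow> biclique V E P \<and> biclique V E Q \<and>
     (\<exists>XP YP XQ YQ. P = XP \<union> YP \<and> biclique_sides V E XP YP \<and>
        Q = XQ \<union> YQ \<and> biclique_sides V E XQ YQ \<and> XQ \<subset> XP \<and> YP \<subset> YQ)"

end

theory Submission
  imports Defs
begin

text \<open>In a triangle-free graph a biclique is exactly a pair of sides each of which is the common
neighbourhood of the other. If \<open>P = X\<^sub>PY\<^sub>P\<close> and \<open>Q = X\<^sub>QY\<^sub>Q\<close> share a vertex \<open>v\<close>, name the sides so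
that \<open>v \<in> X\<^sub>P \<inter> X\<^sub>Q\<close>. The common neighbourhood of \<open>X\<^sub>P \<inter> X\<^sub>Q\<close> is independent, since all its
vertices are adjacent to \<open>v\<close>, so \<open>X\<^sub>P \<inter> X\<^sub>Q\<close> and its common neighbourhood form a biclique \<open>R\<close>.
Unless one of \<open>X\<^sub>P, X\<^sub>Q\<close> contains the other (and then \<open>P\<close>, \<open>Q\<close> are mutually included), \<open>R\<close> is
mutually included with both.\<close>

definition common_nbrs :: "'a set \<Rightarrow> ('a \<Rightarrow> 'a \<Rightarrow> bool) \<Rightarrow> 'a set \<Rightarrow> 'a set" where
  "common_nbrs V E S = {u \<in> V. \<forall>s\<in>S. E u s}"

definition closed_sides :: "'a set \<Rightarrow> ('a \<Rightarrow> 'a \<Rightarrow> bool) \<Rightarrow> 'a set \<Rightarrow> 'a set \<Rightarrow> bool" where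
  "closed_sides V E X Y \<longleftrightarrow>
     biclique_sides V E X Y \<and> X = common_nbrs V E Y \<and> Y = common_nbrs V E X"

lemma common_nbrs_antimono: "S \<subseteq> T \<Longrightarrow> common_nbrs V E T \<subseteq> common_nbrs V E S"
  unfolding common_nbrs_def by blast

lemma simple_graph_sym: "simple_graph V E \<Longrightarrow> E a b \<Longrightarrow> E b a"
  unfolding simple_graph_def by blast

lemma subset_common_nbrs_common_nbrs:
  assumes "simple_graph V E" "S \<subseteq> V"
  shows "S \<subseteq> common_nbrs V E (common_nbrs V E S)"
  using assms(2) simple_graph_sym[OF assms(1)] unfolding common_nbrs_def by auto

lemma triangle_freeD:
  assumes "simple_graph V E" "triangle_free V E" "E a b" "E b c" "E a c"
  shows False
proof -
  have "a \<in> V" "b \<in> V" "c \<in> V" using assms(1,3,4) unfolding simple_graph_def by blast+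
  then show False using assms(2-5) unfolding triangle_free_def by blast
qed

lemma biclique_sides_sym:
  assumes "simple_graph V E" "biclique_sides V E X Y"
  shows "biclique_sides V E Y X"
  using assms simple_graph_sym[OF assms(1)] unfolding biclique_sides_def by blast

lemma biclique_sides_subset_common_nbrs:
  "biclique_sides V E X Y \<Longrightarrow> X \<subseteq> common_nbrs V E Y"
  unfolding biclique_sides_def common_nbrs_def by blast

lemma closed_sides_sym:
  "simple_graph V E \<Longrightarrow> closed_sides V E X Y \<Longrightarrow> closed_sides V E Y X"
  unfolding closed_sides_def using biclique_sides_sym by blast

lemma biclique_sides_insert_common_nbr:
  assumes g: "simple_graph V E" and t: "triangle_free V E"
    and s: "biclique_sides V E X Y" and u: "u \<in> common_nbrs V E Y"
  shows "biclique_sides V E (insert u X) Y"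
proof -
  obtain y where y: "y \<in> Y" using s unfolding biclique_sides_def by blast
  have uy: "E u y" using u y unfolding common_nbrs_def by blast
  have "u \<notin> Y" using s y uy unfolding biclique_sides_def by blast
  moreover have "\<not> E a b" if a: "a \<in> insert u X" and b: "b \<in> insert u X" for a b
  proof
    assume ab: "E a b"
    have "E a y" "E b y" using a b uy y s unfolding biclique_sides_def by blast+
    then show False using triangle_freeD[OF g t ab] by blast
  qed
  ultimately show ?thesis
    using s u unfolding biclique_sides_def common_nbrs_def by (simp add: Int_insert_left)
qed

lemma biclique_side_eq_common_nbrs:
  assumes g: "simple_graph V E" and t: "triangle_free V E"
    and b: "biclique V E (X \<union> Y)" and s: "biclique_sides V E X Y"
  shows "X = common_nbrs V E Y"
proof
  show "X \<subseteq> common_nbrs V E Y" using biclique_sides_subset_common_nbrs[OF s] .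
  show "common_nbrs V E Y \<subseteq> X"
  proof
    fix u assume u: "u \<in> common_nbrs V E Y"
    have s': "biclique_sides V E (insert u X) Y"
      using biclique_sides_insert_common_nbr[OF g t s u] .
    then have "complete_bipartite_set V E (insert u X \<union> Y)"
      unfolding complete_bipartite_set_def by blast
    then have "\<not> X \<union> Y \<subset> insert u X \<union> Y" using b unfolding biclique_def by blast
    moreover have "u \<notin> Y" using s' unfolding biclique_sides_def by blast
    ultimately show "u \<in> X" by blast
  qed
qed

lemma biclique_imp_closed_sides:
  assumes g: "simple_graph V E" and t: "triangle_free V E"
    and b: "biclique V E (X \<union> Y)" and s: "biclique_sides V E X Y"
  shows "closed_sides V E X Y"
proof -
  have "biclique V E (Y \<union> X)" using b by (simp add: Un_commute)
  then have "Y = common_nbrs V E X"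
    using biclique_side_eq_common_nbrs[OF g t _ biclique_sides_sym[OF g s]] by blast
  then show ?thesis
    using biclique_side_eq_common_nbrs[OF g t b s] s unfolding closed_sides_def by blast
qed

lemma biclique_sides_within:
  assumes s: "biclique_sides V E X Y" and sAB: "biclique_sides V E A B"
    and sub: "X \<union> Y \<subseteq> A \<union> B" and x: "x \<in> X" "x \<in> A"
  shows "X \<subseteq> A \<and> Y \<subseteq> B"
proof -
  have Y: "Y \<subseteq> B"
  proof
    fix y assume "y \<in> Y"
    then have "E x y" "y \<in> A \<union> B" using s x sub unfolding biclique_sides_def by blast+
    then show "y \<in> B" using sAB x unfolding biclique_sides_def by blast
  qed
  have "X \<subseteq> A"
  proof
    fix x' assume "x' \<in> X"
    moreover obtain y where "y \<in> Y" using s unfolding biclique_sides_def by blast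
    ultimately have "E x' y" "x' \<in> A \<union> B" "y \<in> B" using s sub Y unfolding biclique_sides_def by blast+
    then show "x' \<in> A" using sAB unfolding biclique_sides_def by blast
  qed
  with Y show ?thesis by blast
qed

lemma closed_sides_maximal:
  assumes g: "simple_graph V E" and c: "closed_sides V E X Y"
    and sAB: "biclique_sides V E A B" and sub: "X \<union> Y \<subseteq> A \<union> B"
  shows "A \<union> B = X \<union> Y"
proof -
  have s: "biclique_sides V E X Y" and cX: "X = common_nbrs V E Y" and cY: "Y = common_nbrs V E X"
    using c unfolding closed_sides_def by blast+
  have within: "A' \<union> B' \<subseteq> X \<union> Y"
    if sAB': "biclique_sides V E A' B'" and sub': "X \<union> Y \<subseteq> A' \<union> B'" and x: "x \<in> X" "x \<in> A'"
    for A' B' x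
  proof -
    have "X \<subseteq> A'" "Y \<subseteq> B'" using biclique_sides_within[OF s sAB' sub' x] by blast+
    then have "A' \<subseteq> common_nbrs V E Y" "B' \<subseteq> common_nbrs V E X"
      using biclique_sides_subset_common_nbrs sAB' biclique_sides_sym[OF g sAB']
        common_nbrs_antimono by (metis order_trans)+
    then show ?thesis using cX cY by blast
  qed
  obtain x where x: "x \<in> X" using s unfolding biclique_sides_def by blast
  have "A \<union> B \<subseteq> X \<union> Y"
  proof (cases "x \<in> A")
    case True
    then show ?thesis using within[OF sAB sub x] by blast
  next
    case False
    then have "x \<in> B" using x sub by blast
    moreover have "X \<union> Y \<subseteq> B \<union> A" using sub by blast
    ultimately show ?thesis using within[OF biclique_sides_sym[OF g sAB] _ x] by blast
  qed
  with sub show ?thesis by blast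
qed

lemma closed_sides_imp_biclique:
  assumes g: "simple_graph V E" and c: "closed_sides V E X Y"
  shows "biclique V E (X \<union> Y)"
  unfolding biclique_def
proof (intro conjI allI impI notI)
  show "complete_bipartite_set V E (X \<union> Y)"
    using c unfolding complete_bipartite_set_def closed_sides_def by blast
  fix P' assume "X \<union> Y \<subset> P'" "complete_bipartite_set V E P'"
  then show False
    using closed_sides_maximal[OF g c] unfolding complete_bipartite_set_def by blast
qed

lemma biclique_obtain_closed_sides:
  assumes g: "simple_graph V E" and t: "triangle_free V E"
    and b: "biclique V E P" and v: "v \<in> P"
  obtains X Y where "P = X \<union> Y" "closed_sides V E X Y" "v \<in> X"
proof -
  obtain X Y where P: "P = X \<union> Y" and s: "biclique_sides V E X Y"
    using b unfolding biclique_def complete_bipartite_set_def by blast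
  have "closed_sides V E X Y" using biclique_imp_closed_sides[OF g t] b P s by blast
  then show ?thesis using that closed_sides_sym[OF g] P v by blast
qed

lemma mutually_included_sym:
  "simple_graph V E \<Longrightarrow> mutually_included V E P Q \<Longrightarrow> mutually_included V E Q P"
  unfolding mutually_included_def by (metis Un_commute biclique_sides_sym)

lemma mutually_included_if_side_psubset:
  assumes g: "simple_graph V E"
    and cP: "closed_sides V E XP YP" and cQ: "closed_sides V E XQ YQ" and X: "XQ \<subset> XP"
  shows "mutually_included V E (XP \<union> YP) (XQ \<union> YQ)"
proof -
  have "YP \<subseteq> YQ" using cP cQ X common_nbrs_antimono[of XQ XP]
    unfolding closed_sides_def by blast
  moreover have "YP \<noteq> YQ" using cP cQ X unfolding closed_sides_def by blast
  ultimately show ?thesis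
    using X cP cQ closed_sides_imp_biclique[OF g] unfolding mutually_included_def closed_sides_def
    by blast
qed

lemma closed_sides_inter:
  assumes g: "simple_graph V E" and t: "triangle_free V E"
    and cP: "closed_sides V E XP YP" and cQ: "closed_sides V E XQ YQ" and v: "v \<in> XP \<inter> XQ"
  shows "closed_sides V E (XP \<inter> XQ) (common_nbrs V E (XP \<inter> XQ))"
    (is "closed_sides V E ?X ?Y")
proof -
  have sP: "biclique_sides V E XP YP" and XP: "XP = common_nbrs V E YP" "YP = common_nbrs V E XP"
    using cP unfolding closed_sides_def by blast+
  have XQ: "XQ = common_nbrs V E YQ" "YQ = common_nbrs V E XQ"
    using cQ unfolding closed_sides_def by blast+
  have XV: "?X \<subseteq> V" and X_indep: "\<forall>x\<in>?X. \<forall>x'\<in>?X. \<not> E x x'"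
    using sP unfolding biclique_sides_def by blast+
  have YP: "YP \<subseteq> ?Y"
    using common_nbrs_antimono[of ?X XP V E] XP(2) by simp
  have YQ: "YQ \<subseteq> ?Y"
    using common_nbrs_antimono[of ?X XQ V E] XQ(2) by simp
  have "common_nbrs V E ?Y \<subseteq> common_nbrs V E YP \<inter> common_nbrs V E YQ"
    using common_nbrs_antimono[OF YP] common_nbrs_antimono[OF YQ] by (rule Int_greatest)
  then have "common_nbrs V E ?Y \<subseteq> ?X" by (metis XP(1) XQ(1))
  with subset_common_nbrs_common_nbrs[OF g XV] have X: "?X = common_nbrs V E ?Y" by (rule subset_antisym)
  have adj_v: "E a v" if "a \<in> ?Y" for a
    using that v unfolding common_nbrs_def by blast
  have Y_indep: "\<not> E a b" if "a \<in> ?Y" "b \<in> ?Y" for a b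
    using triangle_freeD[OF g t _ adj_v adj_v] that by blast
  have "?X \<inter> ?Y = {}"
    using X_indep adj_v v by blast
  moreover have "?Y \<noteq> {}" using YP sP unfolding biclique_sides_def by blast
  moreover have "\<forall>x\<in>?X. \<forall>y\<in>?Y. E x y"
    unfolding common_nbrs_def using simple_graph_sym[OF g] by blast
  moreover have "?Y \<subseteq> V" unfolding common_nbrs_def by blast
  ultimately have "biclique_sides V E ?X ?Y"
    using XV X_indep Y_indep v unfolding biclique_sides_def by blast
  then show ?thesis using X unfolding closed_sides_def by blast
qed

theorem corollary1:
  fixes V :: "'a set" and E :: "'a \<Rightarrow> 'a \<Rightarrow> bool" and P Q :: "'a set"
  assumes "simple_graph V E"
    and "triangle_free V E"
    and "biclique V E P" and "biclique V E Q"
    and "P \<noteq> Q"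
    and "P \<inter> Q \<noteq> {}"
  shows "mutually_included V E P Q \<or>
         (\<exists>R. biclique V E R \<and> mutually_included V E P R \<and> mutually_included V E Q R)"
proof -
  note g = assms(1) and t = assms(2)
  obtain v where v: "v \<in> P" "v \<in> Q" using assms(6) by blast
  obtain XP YP where P: "P = XP \<union> YP" and cP: "closed_sides V E XP YP" and "v \<in> XP"
    using biclique_obtain_closed_sides[OF g t assms(3) v(1)] .
  obtain XQ YQ where Q: "Q = XQ \<union> YQ" and cQ: "closed_sides V E XQ YQ" and "v \<in> XQ"
    using biclique_obtain_closed_sides[OF g t assms(4) v(2)] .
  have "XP \<noteq> XQ" using assms(5) P Q cP cQ unfolding closed_sides_def by blast
  define XR where "XR = XP \<inter> XQ"
  define YR where "YR = common_nbrs V E XR"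
  have cR: "closed_sides V E XR YR"
    unfolding XR_def YR_def using closed_sides_inter[OF g t cP cQ] \<open>v \<in> XP\<close> \<open>v \<in> XQ\<close> by blast
  consider "XQ \<subset> XP" | "XP \<subset> XQ" | "XR \<subset> XP" "XR \<subset> XQ"
    using \<open>XP \<noteq> XQ\<close> unfolding XR_def by blast
  then show ?thesis
  proof cases
    case 1
    then show ?thesis using mutually_included_if_side_psubset[OF g cP cQ] P Q by blast
  next
    case 2
    then show ?thesis
      using mutually_included_sym[OF g] mutually_included_if_side_psubset[OF g cQ cP] P Q by blast
  next
    case 3
    then show ?thesis
      using mutually_included_if_side_psubset[OF g _ cR] cP cQ P Q closed_sides_imp_biclique[OF g cR]
      by blast
  qed
qed

end
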